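(* \begin{enumerate} \item For the 4-taxon tree $T_{ab|cd}$ and the 2-state GM+I model, suppose $P=\phi_T(\mathbf s)$. Then generically the parameters in $\mathbf s$ related to invariable sites can be recovered from $P$ by the following formulas: $$\delta=\frac {|A_1|+|A_2|}{|B|},\ \ \boldsymbol \pi_I=\frac 1{|A_1|+|A_2|} \left ( |A_1|,|A_2|\right ),$$ where $B=\begin{pmatrix} p_{1212} & p_{1221} \\ p_{2112} & p_{2121} \end{pmatrix}$, $$A_1=\begin{pmatrix} p_{1111} & p_{1112} & p_{1121}\\ p_{1211} & p_{1212} & p_{1221}\\ p_{2111} & p_{2112} & p_{2121} \end{pmatrix}, \ \ A_2=\begin{pmatrix} p_{1212} & p_{1221} & p_{1222}\\ p_{2112} & p_{2121} & p_{2122}\\ p_{2212} & p_{2221} & p_{2222} \end{pmatrix}.$$ \item More generally, for the $\kappa$-state GM+I model on $T_{ab|cd}$, the invariable site parameters can be recovered from a generic point in the image of the parameterization map by rational formulas of the form $$\delta=\frac {\sum_{i\in[\kappa]}|A_i|}{|B|}, \ \ \boldsymbol \pi_I=\frac 1{\sum_{i\in[\kappa]} |A_i|} \left ( |A_1|,|A_2|,\dots, |A_\kappa|\right ).$$ Here $|B|$ is any $\kappa \times \kappa$ minor of $F_{ab|cd}$ that omits all rows and columns indexed by $ii$, and $|A_i|$ is the $(\kappa+1)\times(\kappa+1)$ minor obtained by including all rows and columns chosen for $B$ and in addition the $ii$ row and $ii$ column. \end{enumerate}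
   Context: The $\kappa$-state general Markov plus invariable sites (GM+I) model on a tree $T$: with probability $\delta$ (class size parameter) a site is invariable and is assigned state $i\in[\kappa]=\{1,\dots,\kappa\}$ with probability $\pi_I(i)$, where $\boldsymbol\pi_I=(\pi_I(1),\dots,\pi_I(\kappa))$; otherwise the site evolves under the general Markov (GM) model on $T$ (a root distribution $\boldsymbol\pi_{GM}$ and a $\kappa\times\kappa$ Markov matrix $M_e$ on each edge). The parameterization map $\phi_T$ sends parameters $\mathbf s$ to the joint distribution $P$ of states at the leaves, so $P=(1-\delta)P_{GM}+\delta\,\operatorname{diag}(\boldsymbol\pi_I)$ where $P_{GM}$ is a GM joint distribution on $T$ and $\operatorname{diag}(\boldsymbol\pi_I)$ is the array with $\pi_I(i)$ at entry $(i,i,\dots,i)$ and zeros elsewhere. $T_{ab|cd}$ is the binary 4-taxon tree whose internal edge induces the split $ab|cd$; pattern frequencies are $p_{ijkl}=P(i,j,k,l)$, indexed by the states at leaves $a,b,c,d$. The flattening $F_{ab|cd}$ is the $\kappa^2\times\kappa^2$ matrix with rows indexed by the states $ij$ at $(a,b)$, columns indexed by the states $kl$ at $(c,d)$, and $(ij,kl)$ entry $p_{ijkl}$. `Generically' means for all parameters outside a proper algebraic subvariety of the parameter space. *)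

theory Defs
  imports Main Complex_Main "Jordan_Normal_Form.Determinant"
begin

text \<open>The GM model is rooted at the internal node u joining a and b; the internal edge
  is directed from u to the internal node v joining c and d. States are [kappa] = {1..kappa}.\<close>

datatype edge = Ea | Eb | Ec | Ed | Eint

datatype coord = Delta | PiI nat | PiGM nat | Mat edge nat nat

type_synonym params = "coord \<Rightarrow> real"

definition param_space :: "nat \<Rightarrow> params set" where
  "param_space \<kappa> = {s.
     0 \<le> s Delta \<and> s Delta \<le> 1
   \<and> (\<forall>i\<in>{1..\<kappa>}. 0 \<le> s (PiI i)) \<and> (\<Sum>i=1..\<kappa>. s (PiI i)) = 1
   \<and> (\<forall>i\<in>{1..\<kappa>}. 0 \<le> s (PiGM i)) \<and> (\<Sum>i=1..\<kappa>. s (PiGM i)) = 1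
   \<and> (\<forall>e. \<forall>x\<in>{1..\<kappa>}. \<forall>y\<in>{1..\<kappa>}. 0 \<le> s (Mat e x y))
   \<and> (\<forall>e. \<forall>x\<in>{1..\<kappa>}. (\<Sum>y=1..\<kappa>. s (Mat e x y)) = 1)
   \<and> (\<forall>i. i \<notin> {1..\<kappa>} \<longrightarrow> s (PiI i) = 0 \<and> s (PiGM i) = 0)
   \<and> (\<forall>e x y. (x \<notin> {1..\<kappa>} \<or> y \<notin> {1..\<kappa>}) \<longrightarrow> s (Mat e x y) = 0)}"

definition P_GM :: "nat \<Rightarrow> params \<Rightarrow> nat \<Rightarrow> nat \<Rightarrow> nat \<Rightarrow> nat \<Rightarrow> real" where
  "P_GM \<kappa> s i j k l =
     (\<Sum>x=1..\<kappa>. \<Sum>y=1..\<kappa>. s (PiGM x) * s (Mat Ea x i) * s (Mat Eb x j)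
        * s (Mat Eint x y) * s (Mat Ec y k) * s (Mat Ed y l))"

definition phi :: "nat \<Rightarrow> params \<Rightarrow> nat \<Rightarrow> nat \<Rightarrow> nat \<Rightarrow> nat \<Rightarrow> real" where
  "phi \<kappa> s i j k l =
     (1 - s Delta) * P_GM \<kappa> s i j k l
     + s Delta * (if i = j \<and> j = k \<and> k = l then s (PiI i) else 0)"

inductive poly_fun :: "(params \<Rightarrow> real) \<Rightarrow> bool" where
  pf_const: "poly_fun (\<lambda>s. c)"
| pf_var: "poly_fun (\<lambda>s. s v)"
| pf_add: "poly_fun f \<Longrightarrow> poly_fun g \<Longrightarrow> poly_fun (\<lambda>s. f s + g s)"
| pf_mult: "poly_fun f \<Longrightarrow> poly_fun g \<Longrightarrow> poly_fun (\<lambda>s. f s * g s)"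

text \<open>Q holds generically on the parameter space: outside the zero set of a polynomial
  that does not vanish identically on the parameter space (i.e. outside a proper
  algebraic subvariety).\<close>
definition generically :: "nat \<Rightarrow> (params \<Rightarrow> bool) \<Rightarrow> bool" where
  "generically \<kappa> Q \<longleftrightarrow> (\<exists>f. poly_fun f \<and> (\<exists>s\<in>param_space \<kappa>. f s \<noteq> 0)
      \<and> (\<forall>s\<in>param_space \<kappa>. f s \<noteq> 0 \<longrightarrow> Q s))"

text \<open>Minor of the flattening F_{ab|cd} of P with rows rs (states at (a,b)) and
  columns cs (states at (c,d)), taken in the listed order.\<close>
definition flat_minor :: "(nat \<Rightarrow> nat \<Rightarrow> nat \<Rightarrow> nat \<Rightarrow> real)
     \<Rightarrow> (nat \<times> nat) list \<Rightarrow> (nat \<times> nat) list \<Rightarrow> real" where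
  "flat_minor P rs cs = det (mat (length rs) (length cs)
      (\<lambda>(p, q). P (fst (rs ! p)) (snd (rs ! p)) (fst (cs ! q)) (snd (cs ! q))))"

definition offdiag_choice :: "nat \<Rightarrow> (nat \<times> nat) list \<Rightarrow> bool" where
  "offdiag_choice \<kappa> rs \<longleftrightarrow> length rs = \<kappa> \<and> distinct rs
     \<and> (\<forall>(i,j)\<in>set rs. i \<in> {1..\<kappa>} \<and> j \<in> {1..\<kappa>} \<and> i \<noteq> j)"

end

theory Submission
  imports Defs
begin

text \<open>On off-diagonal row and column patterns the flattening of
  \<open>P = (1 - \<delta>) P_GM + \<delta> diag(\<pi>_I)\<close> coincides with that of \<open>(1 - \<delta>) P_GM\<close>, and the GM
  flattening factors through the \<open>\<kappa>\<close> states of the internal node, so it has rank at most \<open>\<kappa>\<close>.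
  Bordering \<open>B\<close> by the row and column \<open>ii\<close> therefore perturbs a rank-\<open>\<kappa>\<close> matrix only in the new
  diagonal entry, by \<open>\<delta> \<pi>_I(i)\<close>, and Laplace expansion gives \<open>|A_i| = \<delta> \<pi>_I(i) |B|\<close>. Summing
  over \<open>i\<close> yields \<open>\<Sum>|A_i| = \<delta> |B|\<close>, hence the formulas wherever \<open>\<delta> |B| \<noteq> 0\<close>. This is a
  generic condition: \<open>\<delta> |B|\<close> is polynomial in the parameters and nonzero where the GM process
  deterministically emits the patterns of \<open>B\<close>, making \<open>B\<close> a nonzero scalar matrix.\<close>

lemma det_mult_through_smaller_dim:
  fixes U V :: "'a :: comm_ring_1 mat"
  assumes U: "U \<in> carrier_mat (Suc n) n" and V: "V \<in> carrier_mat n (Suc n)"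
  shows "det (U * V) = 0"
proof -
  define U' where "U' = mat (Suc n) (Suc n) (\<lambda>(p, q). if q < n then U $$ (p, q) else 0)"
  define V' where "V' = mat (Suc n) (Suc n) (\<lambda>(p, q). if p < n then V $$ (p, q) else 0)"
  have U': "U' \<in> carrier_mat (Suc n) (Suc n)" and V': "V' \<in> carrier_mat (Suc n) (Suc n)"
    unfolding U'_def V'_def by auto
  have "U' * V' = U * V"
  proof (rule eq_matI)
    fix i j assume ij: "i < dim_row (U * V)" "j < dim_col (U * V)"
    have "(U' * V') $$ (i, j) = (\<Sum>k<Suc n. U' $$ (i, k) * V' $$ (k, j))"
      using ij U V U' V' by (simp add: scalar_prod_def atLeast0LessThan)
    also have "\<dots> = (\<Sum>k<n. U $$ (i, k) * V $$ (k, j))"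
      using ij U V by (simp add: U'_def V'_def)
    also have "\<dots> = (U * V) $$ (i, j)"
      using ij U V by (simp add: scalar_prod_def atLeast0LessThan)
    finally show "(U' * V') $$ (i, j) = (U * V) $$ (i, j)" .
  qed (use U V U' V' in auto)
  moreover have "det U' = 0"
    using laplace_expansion_column[OF U', of n] by (simp add: U'_def)
  ultimately show ?thesis
    using det_mult[OF U' V'] by simp
qed

lemma det_change_diagonal_entry:
  fixes A B :: "'a :: comm_ring_1 mat"
  assumes A: "A \<in> carrier_mat n n" and B: "B \<in> carrier_mat n n" and k: "k < n"
    and agree: "\<And>p q. p < n \<Longrightarrow> q < n \<Longrightarrow> (p, q) \<noteq> (k, k) \<Longrightarrow> A $$ (p, q) = B $$ (p, q)"
  shows "det A = det B + (A $$ (k, k) - B $$ (k, k)) * det (mat_delete B k k)"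
proof -
  have same_cofactor: "cofactor A k q = cofactor B k q" for q
  proof -
    have "mat_delete A k q = mat_delete B k q"
      using A B agree by (intro eq_matI) (auto simp: mat_delete_def)
    then show ?thesis by (simp add: cofactor_def)
  qed
  have "det A = (\<Sum>q<n. A $$ (k, q) * cofactor B k q)"
    using laplace_expansion_row[OF A k] by (simp add: same_cofactor)
  also have "\<dots> = (\<Sum>q<n. B $$ (k, q) * cofactor B k q
      + (if q = k then (A $$ (k, k) - B $$ (k, k)) * cofactor B k k else 0))"
    using agree k by (intro sum.cong) (auto simp: algebra_simps)
  also have "\<dots> = det B + (A $$ (k, k) - B $$ (k, k)) * det (mat_delete B k k)"
    using k by (simp add: sum.distrib laplace_expansion_row[OF B k] cofactor_def)
  finally show ?thesis .
qed

lemma nth_insert_at_shifted: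
  assumes "p < length xs" "k \<le> length xs"
  shows "(take k xs @ y # drop k xs) ! (if p < k then p else Suc p) = xs ! p"
  using assms by (auto simp: nth_append min_def)

lemma nth_insert_at_mem:
  assumes "p < Suc (length xs)" "k \<le> length xs" "p \<noteq> k"
  shows "(take k xs @ y # drop k xs) ! p \<in> set xs"
  using assms by (auto simp: nth_append min_def intro!: nth_mem)

definition flat_submatrix :: "(nat \<Rightarrow> nat \<Rightarrow> nat \<Rightarrow> nat \<Rightarrow> 'a)
    \<Rightarrow> (nat \<times> nat) list \<Rightarrow> (nat \<times> nat) list \<Rightarrow> 'a mat" where
  "flat_submatrix P rs cs = mat (length rs) (length cs)
      (\<lambda>(p, q). P (fst (rs ! p)) (snd (rs ! p)) (fst (cs ! q)) (snd (cs ! q)))"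

lemma flat_minor_eq_det: "flat_minor P rs cs = det (flat_submatrix P rs cs)"
  by (simp add: flat_minor_def flat_submatrix_def)

lemma flat_submatrix_dim [simp]:
  "dim_row (flat_submatrix P rs cs) = length rs" "dim_col (flat_submatrix P rs cs) = length cs"
  by (simp_all add: flat_submatrix_def)

lemma flat_submatrix_carrier:
  "length rs = m \<Longrightarrow> length cs = n \<Longrightarrow> flat_submatrix P rs cs \<in> carrier_mat m n"
  by (simp add: flat_submatrix_def)

lemma flat_submatrix_index [simp]:
  "p < length rs \<Longrightarrow> q < length cs \<Longrightarrow>
    flat_submatrix P rs cs $$ (p, q) = P (fst (rs ! p)) (snd (rs ! p)) (fst (cs ! q)) (snd (cs ! q))"
  by (simp add: flat_submatrix_def)

lemma flat_submatrix_cong: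
  assumes "\<And>p q. p < length rs \<Longrightarrow> q < length cs \<Longrightarrow>
    P (fst (rs ! p)) (snd (rs ! p)) (fst (cs ! q)) (snd (cs ! q))
    = Q (fst (rs ! p)) (snd (rs ! p)) (fst (cs ! q)) (snd (cs ! q))"
  shows "flat_submatrix P rs cs = flat_submatrix Q rs cs"
  using assms by (intro eq_matI) (auto simp: flat_submatrix_def)

lemma mat_delete_flat_submatrix_insert_at:
  assumes "k \<le> length rs" "k \<le> length cs"
  shows "mat_delete (flat_submatrix P (take k rs @ r # drop k rs) (take k cs @ c # drop k cs)) k k
    = flat_submatrix P rs cs"
  using assms by (intro eq_matI) (auto simp: mat_delete_def flat_submatrix_def nth_insert_at_shifted)

text \<open>Column \<open>y\<close> of the left factor stands for the state \<open>Suc y\<close> at the internal node v.\<close>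

lemma flat_submatrix_P_GM_factors:
  obtains U V where "U \<in> carrier_mat (length rs) \<kappa>" "V \<in> carrier_mat \<kappa> (length cs)"
    "flat_submatrix (P_GM \<kappa> s) rs cs = U * V"
proof
  let ?U = "mat (length rs) \<kappa> (\<lambda>(p, y). \<Sum>x=1..\<kappa>. s (PiGM x) * s (Mat Ea x (fst (rs ! p)))
    * s (Mat Eb x (snd (rs ! p))) * s (Mat Eint x (Suc y)))"
  let ?V = "mat \<kappa> (length cs) (\<lambda>(y, q). s (Mat Ec (Suc y) (fst (cs ! q))) * s (Mat Ed (Suc y) (snd (cs ! q))))"
  show "?U \<in> carrier_mat (length rs) \<kappa>" "?V \<in> carrier_mat \<kappa> (length cs)"
    by auto
  show "flat_submatrix (P_GM \<kappa> s) rs cs = ?U * ?V"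
  proof (rule eq_matI)
    fix p q assume "p < dim_row (?U * ?V)" "q < dim_col (?U * ?V)"
    then have pq: "p < length rs" "q < length cs" by auto
    have "(?U * ?V) $$ (p, q) = (\<Sum>y<\<kappa>. (\<Sum>x=1..\<kappa>. s (PiGM x) * s (Mat Ea x (fst (rs ! p)))
        * s (Mat Eb x (snd (rs ! p))) * s (Mat Eint x (Suc y)))
        * (s (Mat Ec (Suc y) (fst (cs ! q))) * s (Mat Ed (Suc y) (snd (cs ! q)))))"
      using pq by (simp add: scalar_prod_def atLeast0LessThan)
    also have "\<dots> = (\<Sum>y=1..\<kappa>. (\<Sum>x=1..\<kappa>. s (PiGM x) * s (Mat Ea x (fst (rs ! p)))
        * s (Mat Eb x (snd (rs ! p))) * s (Mat Eint x y))
        * (s (Mat Ec y (fst (cs ! q))) * s (Mat Ed y (snd (cs ! q)))))"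
      by (simp add: sum.atLeast1_atMost_eq)
    also have "\<dots> = P_GM \<kappa> s (fst (rs ! p)) (snd (rs ! p)) (fst (cs ! q)) (snd (cs ! q))"
      unfolding P_GM_def sum_distrib_right
      by (rule sum.swap[THEN trans], intro sum.cong) (simp_all add: mult_ac)
    finally show "flat_submatrix (P_GM \<kappa> s) rs cs $$ (p, q) = (?U * ?V) $$ (p, q)"
      using pq by simp
  qed auto
qed

lemma det_flat_submatrix_scaled_P_GM:
  assumes "length rs = Suc \<kappa>" "length cs = Suc \<kappa>"
  shows "det (flat_submatrix (\<lambda>i j k l. c * P_GM \<kappa> s i j k l) rs cs) = 0"
proof -
  obtain U V where U: "U \<in> carrier_mat (Suc \<kappa>) \<kappa>" and V: "V \<in> carrier_mat \<kappa> (Suc \<kappa>)"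
    and UV: "flat_submatrix (P_GM \<kappa> s) rs cs = U * V"
    using flat_submatrix_P_GM_factors assms by metis
  have "flat_submatrix (\<lambda>i j k l. c * P_GM \<kappa> s i j k l) rs cs = c \<cdot>\<^sub>m flat_submatrix (P_GM \<kappa> s) rs cs"
    by (intro eq_matI) (auto simp: flat_submatrix_def)
  then show ?thesis
    using det_mult_through_smaller_dim[OF U V] by (simp add: UV)
qed

lemma phi_off_constant:
  "\<not> (i = j \<and> j = k \<and> k = l) \<Longrightarrow> phi \<kappa> s i j k l = (1 - s Delta) * P_GM \<kappa> s i j k l"
  by (auto simp: phi_def)

lemma flat_minor_phi_insert_at:
  assumes rs: "length rs = \<kappa>" "\<forall>(a, b)\<in>set rs. a \<noteq> b"
    and cs: "length cs = \<kappa>" "\<forall>(a, b)\<in>set cs. a \<noteq> b" and k: "k \<le> \<kappa>"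
  shows "flat_minor (phi \<kappa> s) (take k rs @ (i, i) # drop k rs) (take k cs @ (i, i) # drop k cs)
    = s Delta * s (PiI i) * flat_minor (phi \<kappa> s) rs cs"
proof -
  define rs' where "rs' = take k rs @ (i, i) # drop k rs"
  define cs' where "cs' = take k cs @ (i, i) # drop k cs"
  let ?M = "\<lambda>rs cs. flat_submatrix (phi \<kappa> s) rs cs"
  let ?G = "\<lambda>rs cs. flat_submatrix (\<lambda>i j k l. (1 - s Delta) * P_GM \<kappa> s i j k l) rs cs"
  have len: "length rs' = Suc \<kappa>" "length cs' = Suc \<kappa>"
    using rs cs k by (auto simp: rs'_def cs'_def)
  have rs'_off: "fst (rs' ! p) \<noteq> snd (rs' ! p)" if "p < Suc \<kappa>" "p \<noteq> k" for p
    using nth_insert_at_mem[of p rs k "(i, i)"] that rs k unfolding rs'_def by fastforce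
  have cs'_off: "fst (cs' ! q) \<noteq> snd (cs' ! q)" if "q < Suc \<kappa>" "q \<noteq> k" for q
    using nth_insert_at_mem[of q cs k "(i, i)"] that cs k unfolding cs'_def by fastforce
  have carrier: "?M rs' cs' \<in> carrier_mat (Suc \<kappa>) (Suc \<kappa>)" "?G rs' cs' \<in> carrier_mat (Suc \<kappa>) (Suc \<kappa>)"
    using len by (simp_all add: flat_submatrix_carrier)
  have agree: "?M rs' cs' $$ (p, q) = ?G rs' cs' $$ (p, q)"
    if "p < Suc \<kappa>" "q < Suc \<kappa>" "(p, q) \<noteq> (k, k)" for p q
    using that len rs'_off cs'_off by (auto simp: phi_off_constant)
  have jump: "?M rs' cs' $$ (k, k) - ?G rs' cs' $$ (k, k) = s Delta * s (PiI i)"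
    using len k rs cs by (simp add: rs'_def cs'_def nth_append phi_def)
  have del: "mat_delete (?G rs' cs') k k = ?G rs cs"
    unfolding rs'_def cs'_def by (rule mat_delete_flat_submatrix_insert_at) (use rs cs k in auto)
  have "?G rs cs = ?M rs cs"
  proof (rule flat_submatrix_cong)
    fix p q assume "p < length rs" "q < length cs"
    then have "fst (rs ! p) \<noteq> snd (rs ! p)"
      using rs(2) nth_mem[of p rs] by (auto simp: case_prod_beta)
    then show "(1 - s Delta) * P_GM \<kappa> s (fst (rs ! p)) (snd (rs ! p)) (fst (cs ! q)) (snd (cs ! q))
      = phi \<kappa> s (fst (rs ! p)) (snd (rs ! p)) (fst (cs ! q)) (snd (cs ! q))"
      by (simp add: phi_off_constant)
  qed
  then have "det (?M rs' cs') = s Delta * s (PiI i) * det (?M rs cs)"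
    using det_change_diagonal_entry[OF carrier _ agree, of k] k
    by (simp add: det_flat_submatrix_scaled_P_GM[OF len] jump del)
  then show ?thesis
    by (simp add: flat_minor_eq_det rs'_def cs'_def)
qed

lemma poly_fun_sum:
  "finite A \<Longrightarrow> (\<And>a. a \<in> A \<Longrightarrow> poly_fun (f a)) \<Longrightarrow> poly_fun (\<lambda>s. \<Sum>a\<in>A. f a s)"
proof (induction A rule: finite_induct)
  case empty
  then show ?case using pf_const[of 0] by simp
next
  case (insert x F)
  then show ?case using pf_add[of "f x" "\<lambda>s. \<Sum>a\<in>F. f a s"] by simp
qed

lemma poly_fun_prod:
  "finite A \<Longrightarrow> (\<And>a. a \<in> A \<Longrightarrow> poly_fun (f a)) \<Longrightarrow> poly_fun (\<lambda>s. \<Prod>a\<in>A. f a s)"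
proof (induction A rule: finite_induct)
  case empty
  then show ?case using pf_const[of 1] by simp
next
  case (insert x F)
  then show ?case using pf_mult[of "f x" "\<lambda>s. \<Prod>a\<in>F. f a s"] by simp
qed

lemma poly_fun_diff: "poly_fun f \<Longrightarrow> poly_fun g \<Longrightarrow> poly_fun (\<lambda>s. f s - g s)"
  using pf_add[OF _ pf_mult[OF pf_const[of "-1"]], of f g] by simp

lemma poly_fun_det:
  assumes "\<And>p q. poly_fun (\<lambda>s. F s p q)"
  shows "poly_fun (\<lambda>s. det (mat n m (\<lambda>(p, q). F s p q)))"
proof (cases "n = m")
  case False
  then show ?thesis using pf_const[of 0] by (simp add: det_def)
next
  case True
  have "det (mat n m (\<lambda>(p, q). F s p q))
      = (\<Sum>\<pi> | \<pi> permutes {0..<n}. of_int (signof \<pi>) * (\<Prod>i=0..<n. F s i (\<pi> i)))" for s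
    unfolding det_def using True by (auto intro!: sum.cong prod.cong simp: permutes_in_image)
  then show ?thesis
    by (simp only:) (intro poly_fun_sum poly_fun_prod pf_mult pf_const assms finite_permutations, auto)
qed

lemma poly_fun_P_GM: "poly_fun (\<lambda>s. P_GM \<kappa> s i j k l)"
  unfolding P_GM_def by (intro poly_fun_sum pf_mult pf_var finite_atLeastAtMost)

lemma poly_fun_phi: "poly_fun (\<lambda>s. phi \<kappa> s i j k l)"
proof -
  have "poly_fun (\<lambda>s. if i = j \<and> j = k \<and> k = l then s (PiI i) else 0)"
    using pf_var[of "PiI i"] pf_const[of 0]
    by (cases "i = j \<and> j = k \<and> k = l") (simp_all only: simp_thms if_True if_False)
  then show ?thesis
    unfolding phi_def by (intro pf_add pf_mult poly_fun_diff pf_const pf_var poly_fun_P_GM)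
qed

lemma poly_fun_flat_minor: "poly_fun (\<lambda>s. flat_minor (phi \<kappa> s) rs cs)"
  unfolding flat_minor_def by (rule poly_fun_det) (simp add: poly_fun_phi)

text \<open>Root state \<open>x\<close> deterministically emits the pattern \<open>rs ! (x - 1)\<close> at \<open>(a, b)\<close> and, via
  the identity on the internal edge, \<open>cs ! (x - 1)\<close> at \<open>(c, d)\<close>.\<close>

definition witness_leaf_state :: "(nat \<times> nat) list \<Rightarrow> (nat \<times> nat) list \<Rightarrow> edge \<Rightarrow> nat \<Rightarrow> nat" where
  "witness_leaf_state rs cs e x = (case e of
      Ea \<Rightarrow> fst (rs ! (x - 1)) | Eb \<Rightarrow> snd (rs ! (x - 1))
    | Ec \<Rightarrow> fst (cs ! (x - 1)) | Ed \<Rightarrow> snd (cs ! (x - 1)) | Eint \<Rightarrow> x)"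

definition witness_params :: "nat \<Rightarrow> (nat \<times> nat) list \<Rightarrow> (nat \<times> nat) list \<Rightarrow> params" where
  "witness_params \<kappa> rs cs c = (case c of
      Delta \<Rightarrow> 1 / 2
    | PiI i \<Rightarrow> (if i = 1 then 1 else 0)
    | PiGM i \<Rightarrow> (if i \<in> {1..\<kappa>} then 1 / real \<kappa> else 0)
    | Mat e x y \<Rightarrow> (if x \<in> {1..\<kappa>} \<and> y = witness_leaf_state rs cs e x then 1 else 0))"

lemma witness_leaf_state_range:
  assumes "offdiag_choice \<kappa> rs" "offdiag_choice \<kappa> cs" "x \<in> {1..\<kappa>}"
  shows "witness_leaf_state rs cs e x \<in> {1..\<kappa>}"
proof -
  have "rs ! (x - 1) \<in> set rs" "cs ! (x - 1) \<in> set cs"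
    using assms by (auto simp: offdiag_choice_def)
  then show ?thesis
    using assms unfolding offdiag_choice_def witness_leaf_state_def by (cases e) auto
qed

lemma witness_params_in_param_space:
  assumes rs: "offdiag_choice \<kappa> rs" and cs: "offdiag_choice \<kappa> cs" and "1 \<le> \<kappa>"
  shows "witness_params \<kappa> rs cs \<in> param_space \<kappa>"
proof -
  have row_sum: "(\<Sum>y=1..\<kappa>. witness_params \<kappa> rs cs (Mat e x y)) = 1" if x: "x \<in> {1..\<kappa>}" for e x
  proof -
    have "(\<Sum>y=1..\<kappa>. witness_params \<kappa> rs cs (Mat e x y))
        = (\<Sum>y\<in>{1..\<kappa>}. if y = witness_leaf_state rs cs e x then 1 else 0)"
      using x by (intro sum.cong) (auto simp: witness_params_def)
    then show ?thesis
      using witness_leaf_state_range[OF rs cs x, of e] by simp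
  qed
  have outside: "witness_params \<kappa> rs cs (Mat e x y) = 0" if "x \<notin> {1..\<kappa>} \<or> y \<notin> {1..\<kappa>}" for e x y
    using that witness_leaf_state_range[OF rs cs, of x e] by (auto simp: witness_params_def)
  show ?thesis
    unfolding param_space_def using row_sum outside \<open>1 \<le> \<kappa>\<close>
    by (auto simp: witness_params_def sum.delta')
qed

lemma P_GM_witness_params:
  assumes rs: "offdiag_choice \<kappa> rs" and cs: "offdiag_choice \<kappa> cs" and "p < \<kappa>" "q < \<kappa>"
  shows "P_GM \<kappa> (witness_params \<kappa> rs cs) (fst (rs ! p)) (snd (rs ! p)) (fst (cs ! q)) (snd (cs ! q))
    = (if p = q then 1 / real \<kappa> else 0)"
proof -
  let ?w = "witness_params \<kappa> rs cs"
  have distinct: "length rs = \<kappa>" "distinct rs" "length cs = \<kappa>" "distinct cs"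
    using rs cs by (auto simp: offdiag_choice_def)
  have root_term: "(\<Sum>y=1..\<kappa>. ?w (PiGM x) * ?w (Mat Ea x (fst (rs ! p))) * ?w (Mat Eb x (snd (rs ! p)))
        * ?w (Mat Eint x y) * ?w (Mat Ec y (fst (cs ! q))) * ?w (Mat Ed y (snd (cs ! q))))
      = (if rs ! (x - 1) = rs ! p \<and> cs ! (x - 1) = cs ! q then 1 / real \<kappa> else 0)"
    if x: "x \<in> {1..\<kappa>}" for x
  proof -
    have "(\<Sum>y=1..\<kappa>. ?w (PiGM x) * ?w (Mat Ea x (fst (rs ! p))) * ?w (Mat Eb x (snd (rs ! p)))
        * ?w (Mat Eint x y) * ?w (Mat Ec y (fst (cs ! q))) * ?w (Mat Ed y (snd (cs ! q))))
      = (\<Sum>y\<in>{1..\<kappa>}. if y = x then ?w (PiGM x) * ?w (Mat Ea x (fst (rs ! p))) * ?w (Mat Eb x (snd (rs ! p)))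
          * ?w (Mat Ec x (fst (cs ! q))) * ?w (Mat Ed x (snd (cs ! q))) else 0)"
      using x by (intro sum.cong) (auto simp: witness_params_def witness_leaf_state_def)
    also have "\<dots> = (if rs ! (x - 1) = rs ! p \<and> cs ! (x - 1) = cs ! q then 1 / real \<kappa> else 0)"
      using x by (auto simp: witness_params_def witness_leaf_state_def prod_eq_iff)
    finally show ?thesis .
  qed
  have "P_GM \<kappa> ?w (fst (rs ! p)) (snd (rs ! p)) (fst (cs ! q)) (snd (cs ! q))
      = (\<Sum>x=1..\<kappa>. if rs ! (x - 1) = rs ! p \<and> cs ! (x - 1) = cs ! q then 1 / real \<kappa> else 0)"
    unfolding P_GM_def by (intro sum.cong refl root_term)
  also have "\<dots> = (\<Sum>x<\<kappa>. if x = p \<and> x = q then 1 / real \<kappa> else 0)"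
    using distinct assms(3,4) by (simp add: sum.atLeast1_atMost_eq nth_eq_iff_index_eq cong: if_cong)
  also have "\<dots> = (if p = q then 1 / real \<kappa> else 0)"
    using assms(3) by (cases "p = q") (auto intro: sum.neutral)
  finally show ?thesis .
qed

lemma flat_submatrix_phi_witness_params:
  assumes rs: "offdiag_choice \<kappa> rs" and cs: "offdiag_choice \<kappa> cs"
  shows "flat_submatrix (phi \<kappa> (witness_params \<kappa> rs cs)) rs cs = (1 / (2 * real \<kappa>)) \<cdot>\<^sub>m 1\<^sub>m \<kappa>"
proof (rule eq_matI)
  fix p q assume "p < dim_row ((1 / (2 * real \<kappa>)) \<cdot>\<^sub>m (1\<^sub>m \<kappa> :: real mat))"
    "q < dim_col ((1 / (2 * real \<kappa>)) \<cdot>\<^sub>m (1\<^sub>m \<kappa> :: real mat))"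
  then have pq: "p < \<kappa>" "q < \<kappa>" by auto
  moreover have "length rs = \<kappa>" "length cs = \<kappa>" "fst (rs ! p) \<noteq> snd (rs ! p)"
    using rs cs nth_mem[of p rs] pq by (auto simp: offdiag_choice_def case_prod_beta)
  ultimately show "flat_submatrix (phi \<kappa> (witness_params \<kappa> rs cs)) rs cs $$ (p, q)
    = ((1 / (2 * real \<kappa>)) \<cdot>\<^sub>m 1\<^sub>m \<kappa>) $$ (p, q)"
    using P_GM_witness_params[OF rs cs pq] by (simp add: phi_off_constant witness_params_def)
qed (use rs cs in \<open>auto simp: offdiag_choice_def\<close>)

lemma generically_if_Delta_flat_minor_nonzero:
  assumes rs: "offdiag_choice \<kappa> rs" and cs: "offdiag_choice \<kappa> cs" and "0 < \<kappa>"
    and Q: "\<And>s. s \<in> param_space \<kappa> \<Longrightarrow> s Delta \<noteq> 0 \<Longrightarrow> flat_minor (phi \<kappa> s) rs cs \<noteq> 0 \<Longrightarrow> Q s"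
  shows "generically \<kappa> Q"
  unfolding generically_def
proof (intro exI conjI)
  show "poly_fun (\<lambda>s. s Delta * flat_minor (phi \<kappa> s) rs cs)"
    by (intro pf_mult pf_var poly_fun_flat_minor)
  have "witness_params \<kappa> rs cs Delta * flat_minor (phi \<kappa> (witness_params \<kappa> rs cs)) rs cs \<noteq> 0"
    using \<open>0 < \<kappa>\<close> by (simp add: flat_minor_eq_det flat_submatrix_phi_witness_params[OF rs cs] witness_params_def)
  then show "\<exists>s\<in>param_space \<kappa>. s Delta * flat_minor (phi \<kappa> s) rs cs \<noteq> 0"
    using witness_params_in_param_space[OF rs cs] \<open>0 < \<kappa>\<close> by force
  show "\<forall>s\<in>param_space \<kappa>. s Delta * flat_minor (phi \<kappa> s) rs cs \<noteq> 0 \<longrightarrow> Q s"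
    using Q by simp
qed

lemma flat_minor_phi_append_diagonal:
  assumes "offdiag_choice \<kappa> rs" "offdiag_choice \<kappa> cs"
  shows "flat_minor (phi \<kappa> s) (rs @ [(i, i)]) (cs @ [(i, i)])
    = s Delta * s (PiI i) * flat_minor (phi \<kappa> s) rs cs"
  using flat_minor_phi_insert_at[of rs \<kappa> cs \<kappa> s i] assms by (auto simp: offdiag_choice_def)

lemma invariable_sites_recovery:
  assumes rs: "offdiag_choice \<kappa> rs" and cs: "offdiag_choice \<kappa> cs" and "0 < \<kappa>"
  shows "generically \<kappa> (\<lambda>s.
           let P = phi \<kappa> s;
               B = flat_minor P rs cs;
               A = (\<lambda>i. flat_minor P (rs @ [(i,i)]) (cs @ [(i,i)]))
           in B \<noteq> 0 \<and> (\<Sum>i=1..\<kappa>. A i) \<noteq> 0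
              \<and> s Delta = (\<Sum>i=1..\<kappa>. A i) / B
              \<and> (\<forall>i\<in>{1..\<kappa>}. s (PiI i) = A i / (\<Sum>i=1..\<kappa>. A i)))"
proof (rule generically_if_Delta_flat_minor_nonzero[OF rs cs \<open>0 < \<kappa>\<close>])
  fix s assume s: "s \<in> param_space \<kappa>" and "s Delta \<noteq> 0" "flat_minor (phi \<kappa> s) rs cs \<noteq> 0"
  have "(\<Sum>i=1..\<kappa>. s Delta * s (PiI i) * flat_minor (phi \<kappa> s) rs cs)
      = s Delta * flat_minor (phi \<kappa> s) rs cs * (\<Sum>i=1..\<kappa>. s (PiI i))"
    by (simp add: sum_distrib_left algebra_simps)
  also have "\<dots> = s Delta * flat_minor (phi \<kappa> s) rs cs"
    using s by (simp add: param_space_def)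
  finally show "let P = phi \<kappa> s;
               B = flat_minor P rs cs;
               A = (\<lambda>i. flat_minor P (rs @ [(i,i)]) (cs @ [(i,i)]))
           in B \<noteq> 0 \<and> (\<Sum>i=1..\<kappa>. A i) \<noteq> 0
              \<and> s Delta = (\<Sum>i=1..\<kappa>. A i) / B
              \<and> (\<forall>i\<in>{1..\<kappa>}. s (PiI i) = A i / (\<Sum>i=1..\<kappa>. A i))"
    using \<open>s Delta \<noteq> 0\<close> \<open>flat_minor (phi \<kappa> s) rs cs \<noteq> 0\<close>
    by (simp add: flat_minor_phi_append_diagonal[OF rs cs])
qed

lemma invariable_sites_recovery_two_states:
  "generically 2 (\<lambda>s.
           let P = phi 2 s;
               B = flat_minor P [(1,2),(2,1)] [(1,2),(2,1)];
               A1 = flat_minor P [(1,1),(1,2),(2,1)] [(1,1),(1,2),(2,1)];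
               A2 = flat_minor P [(1,2),(2,1),(2,2)] [(1,2),(2,1),(2,2)]
           in B \<noteq> 0 \<and> A1 + A2 \<noteq> 0
              \<and> s Delta = (A1 + A2) / B
              \<and> s (PiI 1) = A1 / (A1 + A2) \<and> s (PiI 2) = A2 / (A1 + A2))"
proof -
  let ?rs = "[(1::nat, 2::nat), (2, 1)]"
  have rs: "offdiag_choice 2 ?rs"
    by (simp add: offdiag_choice_def)
  show ?thesis
  proof (rule generically_if_Delta_flat_minor_nonzero[OF rs rs])
    fix s assume s: "s \<in> param_space 2" and "s Delta \<noteq> 0" "flat_minor (phi 2 s) ?rs ?rs \<noteq> 0"
    let ?B = "flat_minor (phi 2 s) ?rs ?rs"
    have A1: "flat_minor (phi 2 s) [(1,1),(1,2),(2,1)] [(1,1),(1,2),(2,1)]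
        = s Delta * s (PiI 1) * ?B"
      using flat_minor_phi_insert_at[of ?rs 2 ?rs 0 s 1] by simp
    have A2: "flat_minor (phi 2 s) [(1,2),(2,1),(2,2)] [(1,2),(2,1),(2,2)]
        = s Delta * s (PiI 2) * ?B"
      using flat_minor_phi_append_diagonal[OF rs rs, of s 2] by simp
    have "s Delta * s (PiI 1) * ?B + s Delta * s (PiI 2) * ?B = (s (PiI 1) + s (PiI 2)) * (s Delta * ?B)"
      by (simp add: algebra_simps)
    also have "\<dots> = s Delta * ?B"
      using s by (simp add: param_space_def eval_nat_numeral)
    finally have total: "s Delta * s (PiI 1) * ?B + s Delta * s (PiI 2) * ?B = s Delta * ?B" .
    show "let P = phi 2 s;
               B = flat_minor P ?rs ?rs;
               A1 = flat_minor P [(1,1),(1,2),(2,1)] [(1,1),(1,2),(2,1)];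
               A2 = flat_minor P [(1,2),(2,1),(2,2)] [(1,2),(2,1),(2,2)]
           in B \<noteq> 0 \<and> A1 + A2 \<noteq> 0
              \<and> s Delta = (A1 + A2) / B
              \<and> s (PiI 1) = A1 / (A1 + A2) \<and> s (PiI 2) = A2 / (A1 + A2)"
      unfolding Let_def A1 A2 total using \<open>s Delta \<noteq> 0\<close> \<open>?B \<noteq> 0\<close> by simp
  qed simp
qed

theorem proposition12:
  shows "generically 2 (\<lambda>s.
           let P = phi 2 s;
               B = flat_minor P [(1,2),(2,1)] [(1,2),(2,1)];
               A1 = flat_minor P [(1,1),(1,2),(2,1)] [(1,1),(1,2),(2,1)];
               A2 = flat_minor P [(1,2),(2,1),(2,2)] [(1,2),(2,1),(2,2)]
           in B \<noteq> 0 \<and> A1 + A2 \<noteq> 0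
              \<and> s Delta = (A1 + A2) / B
              \<and> s (PiI 1) = A1 / (A1 + A2) \<and> s (PiI 2) = A2 / (A1 + A2))
    \<and> (\<forall>\<kappa>::nat. \<forall>rs cs. 2 \<le> \<kappa> \<longrightarrow> offdiag_choice \<kappa> rs \<longrightarrow> offdiag_choice \<kappa> cs \<longrightarrow>
         generically \<kappa> (\<lambda>s.
           let P = phi \<kappa> s;
               B = flat_minor P rs cs;
               A = (\<lambda>i. flat_minor P (rs @ [(i,i)]) (cs @ [(i,i)]))
           in B \<noteq> 0 \<and> (\<Sum>i=1..\<kappa>. A i) \<noteq> 0
              \<and> s Delta = (\<Sum>i=1..\<kappa>. A i) / B
              \<and> (\<forall>i\<in>{1..\<kappa>}. s (PiI i) = A i / (\<Sum>i=1..\<kappa>. A i))))"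
  using invariable_sites_recovery_two_states invariable_sites_recovery by simp

end
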